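(* Let $\mathsf{L}_1,\mathsf{L}_2$ be finite connected undirected graphs (possibly with tails), where $\mathsf{L}_j$ has $t_j\in\{1,2\}$ marked (ramified) vertices. Let $1\le g\le \min(t_1,t_2)$ and let $\mathsf{L}$ be a $g$-gluing of $\mathsf{L}_1$ and $\mathsf{L}_2$, and assume that $\mathsf{L}$ has $t=t_1+t_2-g$ marked vertices with $1\le t\le 2$. Then $F_t(\mathsf{L})=F_{t_1}(\mathsf{L}_1)F_{t_2}(\mathsf{L}_2)$.
   Context: Denote the marked vertices of $\mathsf{L}_j$ by $v_i(\mathsf{L}_j)$, $1\le i\le t_j$. A $g$-gluing $\mathsf{L}$ of $\mathsf{L}_1$ and $\mathsf{L}_2$ is the graph with edge set $E(\mathsf{L}_1)\sqcup E(\mathsf{L}_2)$ and vertex set $\mathbf{V}(\mathsf{L}_1)\sqcup\mathbf{V}(\mathsf{L}_2)$ modulo the identification $v_1(\mathsf{L}_1)=v_1(\mathsf{L}_2)$ if $g=1$, and modulo $v_i(\mathsf{L}_1)=v_i(\mathsf{L}_2)$ for $i=1,2$ if $g=2$; the marked vertices of $\mathsf{L}$ are the images of the marked vertices of $\mathsf{L}_1,\mathsf{L}_2$. For a finite connected graph $\mathsf{S}$ with $t\in\{1,2\}$ marked vertices, a segmental $t$-tree spanning forest is a decomposition of $\mathsf{S}$ into $t$ trees (a spanning forest with $t$ components) each containing exactly one marked vertex; $F_t(\mathsf{S})$ denotes their number. In particular $F_1(\mathsf{S})$ is the number of spanning trees of $\mathsf{S}$. *)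

theory Defs
  imports Main
begin

text \<open>A finite (multi)graph is given by a finite vertex set V, a finite edge set E and
an endpoint map: each edge has one (loop) or two endpoints in V.
Marked vertices are given as a list of distinct vertices.\<close>

definition fin_graph :: "'v set \<Rightarrow> 'e set \<Rightarrow> ('e \<Rightarrow> 'v set) \<Rightarrow> bool" where
  "fin_graph V E ends \<longleftrightarrow> finite V \<and> finite E \<and>
     (\<forall>e\<in>E. ends e \<subseteq> V \<and> 1 \<le> card (ends e) \<and> card (ends e) \<le> 2)"

definition adj :: "('e \<Rightarrow> 'v set) \<Rightarrow> 'e set \<Rightarrow> 'v \<Rightarrow> 'v \<Rightarrow> bool" where
  "adj ends F x y \<longleftrightarrow> (\<exists>e\<in>F. ends e = {x, y})"

definition reach :: "('e \<Rightarrow> 'v set) \<Rightarrow> 'e set \<Rightarrow> 'v \<Rightarrow> 'v \<Rightarrow> bool" where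
  "reach ends F = (adj ends F)\<^sup>*\<^sup>*"

definition connected_graph :: "'v set \<Rightarrow> 'e set \<Rightarrow> ('e \<Rightarrow> 'v set) \<Rightarrow> bool" where
  "connected_graph V E ends \<longleftrightarrow> (\<forall>x\<in>V. \<forall>y\<in>V. reach ends E x y)"

text \<open>An edge set is a forest iff it contains no cycle: no edge (in particular no loop)
has its endpoints connected by the remaining edges.\<close>
definition forest :: "('e \<Rightarrow> 'v set) \<Rightarrow> 'e set \<Rightarrow> bool" where
  "forest ends F \<longleftrightarrow> (\<forall>e\<in>F. \<forall>x y. ends e = {x, y} \<longrightarrow> \<not> reach ends (F - {e}) x y)"

text \<open>Segmental spanning forest: a spanning forest each of whose components contains
exactly one marked vertex (so it has exactly t = length ms components).\<close>
definition segmental_forest ::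
  "'v set \<Rightarrow> 'e set \<Rightarrow> ('e \<Rightarrow> 'v set) \<Rightarrow> 'v list \<Rightarrow> 'e set \<Rightarrow> bool" where
  "segmental_forest V E ends ms F \<longleftrightarrow> F \<subseteq> E \<and> forest ends F \<and>
     (\<forall>x\<in>V. \<exists>!m. m \<in> set ms \<and> reach ends F x m)"

definition F_count :: "'v set \<Rightarrow> 'e set \<Rightarrow> ('e \<Rightarrow> 'v set) \<Rightarrow> 'v list \<Rightarrow> nat" where
  "F_count V E ends ms = card {F. segmental_forest V E ends ms F}"

text \<open>g-gluing: the i-th marked vertex of L2 is identified with the i-th marked vertex
of L1, for i \<le> g.\<close>
definition glue_map :: "nat \<Rightarrow> 'a list \<Rightarrow> 'b list \<Rightarrow> 'b \<Rightarrow> 'a + 'b" where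
  "glue_map g ms1 ms2 v =
     (if 1 \<le> g \<and> v = ms2 ! 0 then Inl (ms1 ! 0)
      else if 2 \<le> g \<and> v = ms2 ! 1 then Inl (ms1 ! 1) else Inr v)"

definition glue_V :: "nat \<Rightarrow> 'a set \<Rightarrow> 'a list \<Rightarrow> 'b set \<Rightarrow> 'b list \<Rightarrow> ('a + 'b) set" where
  "glue_V g V1 ms1 V2 ms2 = Inl ` V1 \<union> glue_map g ms1 ms2 ` V2"

definition glue_E :: "'c set \<Rightarrow> 'd set \<Rightarrow> ('c + 'd) set" where
  "glue_E E1 E2 = Inl ` E1 \<union> Inr ` E2"

definition glue_ends :: "nat \<Rightarrow> ('c \<Rightarrow> 'a set) \<Rightarrow> 'a list \<Rightarrow> ('d \<Rightarrow> 'b set) \<Rightarrow> 'b list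
    \<Rightarrow> ('c + 'd) \<Rightarrow> ('a + 'b) set" where
  "glue_ends g ends1 ms1 ends2 ms2 e =
     (case e of Inl e1 \<Rightarrow> Inl ` ends1 e1 | Inr e2 \<Rightarrow> glue_map g ms1 ms2 ` ends2 e2)"

definition glue_ms :: "nat \<Rightarrow> 'a list \<Rightarrow> 'b list \<Rightarrow> ('a + 'b) list" where
  "glue_ms g ms1 ms2 = remdups (map Inl ms1 @ map (glue_map g ms1 ms2) ms2)"

end

theory Submission
  imports Defs
begin

(* A subforest of the gluing is the union of its edges in L1 and in L2. The glued vertices are
   marked in both parts, so in a segmental forest of either part no two of them are connected
   and none of them reaches another mark. Hence a path of the gluing that starts in one part and
   crosses into the other through a glued vertex can never come back, and only reaches the mark
   it crossed at: reachability inside a part, and the mark reached from a vertex, are decided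
   within that part. So F is a segmental forest of L iff both halves are segmental forests of
   L1 and L2, and counting pairs gives the product formula.
   Only the distinctness of the marks of L1, the marks lying in the vertex sets and
   g <= min(t1, t2) are needed; connectedness, finiteness and the bounds on t, t1, t2 are not. *)

lemma reach_refl [simp]: "reach ends F x x"
  by (simp add: reach_def)

lemma reach_step: "reach ends F x y \<Longrightarrow> adj ends F y z \<Longrightarrow> reach ends F x z"
  unfolding reach_def by (rule rtranclp.rtrancl_into_rtrancl)

lemma reach_edge: "e \<in> F \<Longrightarrow> ends e = {x, y} \<Longrightarrow> reach ends F x y"
  using reach_step[OF reach_refl, of ends F x y] by (auto simp: adj_def)

lemma reach_mono: "reach ends F x y \<Longrightarrow> F \<subseteq> G \<Longrightarrow> reach ends G x y"
  unfolding reach_def adj_def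
  by (erule rtranclp_mono[THEN predicate2D, rotated]) blast

lemma reach_closed:
  assumes "\<And>e. e \<in> F \<Longrightarrow> ends e \<subseteq> X" "reach ends F x y" "x \<in> X"
  shows "y \<in> X"
  using assms(2,3) unfolding reach_def
  by induction (use assms(1) in \<open>auto simp: adj_def\<close>)

lemma inj_image_eq_doubleton:
  assumes "inj h" "h ` A = {u, w}"
  obtains x y where "u = h x" "w = h y" "A = {x, y}"
proof -
  have "u \<in> h ` A" "w \<in> h ` A" using assms(2) by simp_all
  then obtain x y where xy: "u = h x" "w = h y" by blast
  have "h ` A = h ` {x, y}" using assms(2) xy by simp
  then have "A = {x, y}" by (rule inj_image_eq_iff[OF assms(1), THEN iffD1])
  with xy show thesis by (rule that)
qed

definition graph_hom ::
    "('e \<Rightarrow> 'v set) \<Rightarrow> ('e' \<Rightarrow> 'v' set) \<Rightarrow> ('v \<Rightarrow> 'v') \<Rightarrow> ('e \<Rightarrow> 'e') \<Rightarrow> 'e set \<Rightarrow> bool" where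
  "graph_hom ends ends' h k F \<longleftrightarrow> (\<forall>e\<in>F. ends' (k e) = h ` ends e)"

lemma graph_hom_subset:
  "graph_hom ends ends' h k F \<Longrightarrow> G \<subseteq> F \<Longrightarrow> graph_hom ends ends' h k G"
  by (auto simp: graph_hom_def)

lemma reach_image_iff:
  assumes "inj h" and hom: "graph_hom ends ends' h k F"
  shows "reach ends' (k ` F) (h x) w \<longleftrightarrow> (\<exists>y. w = h y \<and> reach ends F x y)"
proof
  assume "reach ends' (k ` F) (h x) w"
  then show "\<exists>y. w = h y \<and> reach ends F x y"
    unfolding reach_def
  proof induction
    case (step w w')
    obtain y where y: "w = h y" "reach ends F x y" using step.IH by (auto simp: reach_def)
    obtain e where e: "e \<in> F" "h ` ends e = {h y, w'}"
      using step.hyps(2) hom y(1) by (auto simp: adj_def graph_hom_def)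
    obtain y' z where "h y = h y'" "w' = h z" "ends e = {y', z}"
      by (rule inj_image_eq_doubleton[OF assms(1) e(2)])
    then have "w' = h z" "adj ends F y z" using e(1) injD[OF assms(1)] by (auto simp: adj_def)
    moreover have "reach ends F x z" by (rule reach_step[OF y(2) calculation(2)])
    ultimately show ?case by (auto simp: reach_def)
  qed auto
next
  assume "\<exists>y. w = h y \<and> reach ends F x y"
  then obtain y where "w = h y" and "(adj ends F)\<^sup>*\<^sup>* x y" by (auto simp: reach_def)
  from this(2) have "reach ends' (k ` F) (h x) (h y)"
  proof induction
    case (step y z)
    then obtain e where "e \<in> F" "ends e = {y, z}" by (auto simp: adj_def)
    then have "adj ends' (k ` F) (h y) (h z)"
      using hom unfolding adj_def graph_hom_def by (intro bexI[of _ "k e"]) auto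
    then show ?case using step.IH by (rule reach_step[rotated])
  qed simp
  then show "reach ends' (k ` F) (h x) w" using \<open>w = h y\<close> by simp
qed

corollary reach_image:
  "inj h \<Longrightarrow> graph_hom ends ends' h k F \<Longrightarrow>
    reach ends' (k ` F) (h x) (h y) \<longleftrightarrow> reach ends F x y"
  by (simp add: reach_image_iff inj_eq)

lemma forest_subset: "forest ends F \<Longrightarrow> G \<subseteq> F \<Longrightarrow> forest ends G"
  unfolding forest_def by (meson Diff_mono reach_mono subsetD subset_refl)

lemma forest_image_iff:
  assumes "inj h" "inj k" and hom: "graph_hom ends ends' h k F"
  shows "forest ends' (k ` F) \<longleftrightarrow> forest ends F"
proof -
  have reach_del: "reach ends' (k ` F - {k e}) (h x) (h y) \<longleftrightarrow> reach ends (F - {e}) x y" for e x y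
    using reach_image[OF assms(1) graph_hom_subset[OF hom Diff_subset[of F "{e}"]]]
    by (simp add: image_set_diff[OF assms(2)])
  have "(\<forall>u w. h ` ends e = {u, w} \<longrightarrow> \<not> reach ends' (k ` F - {k e}) u w) \<longleftrightarrow>
        (\<forall>x y. ends e = {x, y} \<longrightarrow> \<not> reach ends (F - {e}) x y)" for e
  proof (intro iffI allI impI)
    fix x y
    assume "\<forall>u w. h ` ends e = {u, w} \<longrightarrow> \<not> reach ends' (k ` F - {k e}) u w"
      and "ends e = {x, y}"
    then have "\<not> reach ends' (k ` F - {k e}) (h x) (h y)" by simp
    then show "\<not> reach ends (F - {e}) x y" by (simp add: reach_del)
  next
    fix u w
    assume no_cycle: "\<forall>x y. ends e = {x, y} \<longrightarrow> \<not> reach ends (F - {e}) x y"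
      and "h ` ends e = {u, w}"
    then obtain x y where "u = h x" "w = h y" "ends e = {x, y}"
      using inj_image_eq_doubleton[OF assms(1)] by blast
    then show "\<not> reach ends' (k ` F - {k e}) u w" using no_cycle by (simp add: reach_del)
  qed
  then show ?thesis unfolding forest_def using hom by (auto simp: graph_hom_def)
qed

lemma Ex1_inj_image_iff:
  assumes "inj h"
  shows "(\<exists>!m. \<exists>y. m = h y \<and> P y) \<longleftrightarrow> (\<exists>!y. P y)"
proof
  assume "\<exists>!m. \<exists>y. m = h y \<and> P y"
  then obtain y where y: "P y" and uniq: "\<And>z. P z \<Longrightarrow> h z = h y" by blast
  show "\<exists>!y. P y"
    by (rule ex1I[of _ y]) (use y uniq injD[OF assms] in blast)+
next
  assume "\<exists>!y. P y"
  then show "\<exists>!m. \<exists>y. m = h y \<and> P y" by blast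
qed

lemma segmental_forest_image_iff:
  assumes "inj h" "inj k" and hom: "graph_hom ends ends' h k E"
  shows "segmental_forest (h ` V) (k ` E) ends' (map h ms) (k ` F) \<longleftrightarrow>
         segmental_forest V E ends ms F"
proof (cases "F \<subseteq> E")
  case True
  then have hom_F: "graph_hom ends ends' h k F" by (rule graph_hom_subset[OF hom])
  have "m \<in> set (map h ms) \<and> reach ends' (k ` F) (h x) m \<longleftrightarrow>
        (\<exists>y. m = h y \<and> y \<in> set ms \<and> reach ends F x y)" for x m
    unfolding reach_image_iff[OF assms(1) hom_F] set_map using assms(1) by (auto dest: injD)
  then have "(\<exists>!m. m \<in> set (map h ms) \<and> reach ends' (k ` F) (h x) m) \<longleftrightarrow>
        (\<exists>!y. y \<in> set ms \<and> reach ends F x y)" for x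
    by (simp add: Ex1_inj_image_iff[OF assms(1)])
  then show ?thesis
    using True forest_image_iff[OF assms(1,2) hom_F]
    by (simp add: segmental_forest_def inj_image_subset_iff[OF assms(2)])
next
  case False
  then show ?thesis by (simp add: segmental_forest_def inj_image_subset_iff[OF assms(2)])
qed

lemma F_count_image:
  assumes "inj h" "inj k" and hom: "graph_hom ends ends' h k E"
  shows "F_count (h ` V) (k ` E) ends' (map h ms) = F_count V E ends ms"
proof -
  note seg_iff = segmental_forest_image_iff[OF assms, of V ms]
  have "{F'. segmental_forest (h ` V) (k ` E) ends' (map h ms) F'} =
        image k ` {F. segmental_forest V E ends ms F}"
  proof (intro set_eqI iffI)
    fix F' assume F': "F' \<in> {F'. segmental_forest (h ` V) (k ` E) ends' (map h ms) F'}"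
    then have "F' = k ` (k -` F')" by (auto simp: segmental_forest_def)
    moreover from this F' have "segmental_forest V E ends ms (k -` F')"
      using seg_iff[of "k -` F'"] by simp
    ultimately show "F' \<in> image k ` {F. segmental_forest V E ends ms F}" by blast
  next
    fix F' assume "F' \<in> image k ` {F. segmental_forest V E ends ms F}"
    then show "F' \<in> {F'. segmental_forest (h ` V) (k ` E) ends' (map h ms) F'}"
      using seg_iff by blast
  qed
  moreover have "inj_on (image k) S" for S
    by (rule inj_onI) (simp add: inj_image_eq_iff[OF assms(2)])
  ultimately show ?thesis unfolding F_count_def by (simp add: card_image)
qed

lemma segmental_forest_reach_mark:
  "segmental_forest V E ends ms F \<Longrightarrow> p \<in> V \<Longrightarrow> p \<in> set ms \<Longrightarrow> m \<in> set ms \<Longrightarrow>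
    reach ends F p m \<Longrightarrow> m = p"
  unfolding segmental_forest_def by (blast intro: reach_refl)

definition separated :: "('e \<Rightarrow> 'v set) \<Rightarrow> 'e set \<Rightarrow> 'v set \<Rightarrow> 'v set \<Rightarrow> bool" where
  "separated ends F P M \<longleftrightarrow> (\<forall>p\<in>P. \<forall>m\<in>M. reach ends F p m \<longrightarrow> m = p)"

locale split_graph =
  fixes ends :: "'e \<Rightarrow> 'v set" and X Y :: "'v set" and EA EB :: "'e set"
    and VA VB :: "'v set" and msA msB :: "'v list"
  assumes ends_EA: "e \<in> EA \<Longrightarrow> ends e \<subseteq> X" and ends_EB: "e \<in> EB \<Longrightarrow> ends e \<subseteq> Y"
    and EA_EB_disjoint: "EA \<inter> EB = {}"
    and VA_X: "VA \<subseteq> X" and VB_Y: "VB \<subseteq> Y"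
    and msA_VA: "set msA \<subseteq> VA" and msB_VB: "set msB \<subseteq> VB"
    and shared_marked: "X \<inter> Y \<subseteq> set msA \<inter> set msB"

sublocale split_graph \<subseteq> swap: split_graph ends Y X EB EA VB VA msB msA
  using ends_EA ends_EB EA_EB_disjoint VA_X VB_Y msA_VA msB_VB shared_marked
  by unfold_locales blast+

context split_graph
begin

lemma reach_Un_cases:
  assumes "A \<subseteq> EA" "B \<subseteq> EB" "u \<in> X" and sep: "separated ends B (X \<inter> Y) (set msB)"
    and "reach ends (A \<union> B) u w"
  shows "reach ends A u w \<or> (\<exists>p\<in>X \<inter> Y. reach ends A u p \<and> reach ends B p w)"
  using assms(5) unfolding reach_def[of ends "A \<union> B"]
proof induction
  case base
  show ?case by simp
next
  case (step y w')
  obtain e where e: "e \<in> A \<union> B" "ends e = {y, w'}"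
    using step.hyps(2) by (auto simp: adj_def)
  have A_in_X: "\<And>e. e \<in> A \<Longrightarrow> ends e \<subseteq> X" and B_in_Y: "\<And>e. e \<in> B \<Longrightarrow> ends e \<subseteq> Y"
    using assms(1,2) ends_EA ends_EB by blast+
  from step.IH show ?case
  proof (elim disjE bexE conjE)
    assume uy: "reach ends A u y"
    show ?case
    proof (cases "e \<in> A")
      case True
      then show ?thesis using uy e(2) reach_step[of ends A u y w'] by (auto simp: adj_def)
    next
      case False
      then have "e \<in> B" using e(1) by blast
      moreover have "y \<in> X" using reach_closed[OF A_in_X uy assms(3)] .
      ultimately show ?thesis using uy e(2) B_in_Y reach_edge[of e B ends y w'] by blast
    qed
  next
    fix p assume p: "p \<in> X \<inter> Y" and up: "reach ends A u p" and py: "reach ends B p y"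
    show ?case
    proof (cases "e \<in> B")
      case True
      then show ?thesis using p up py e(2) reach_step[of ends B p y w'] by (auto simp: adj_def)
    next
      case False
      then have "e \<in> A" using e(1) by blast
      then have "y \<in> X \<inter> Y"
        using e(2) A_in_X reach_closed[OF B_in_Y py] p by blast
      then have "y = p" using sep p py shared_marked unfolding separated_def by blast
      then show ?thesis using up \<open>e \<in> A\<close> e(2) reach_step[of ends A u p w'] by (auto simp: adj_def)
    qed
  qed
qed

lemma reach_Un_within:
  assumes "A \<subseteq> EA" "B \<subseteq> EB" "u \<in> X" "w \<in> X" and sep: "separated ends B (X \<inter> Y) (set msB)"
    and "reach ends (A \<union> B) u w"
  shows "reach ends A u w"
  using reach_Un_cases[OF assms(1-3) sep assms(6)]
proof (elim disjE bexE conjE)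
  fix p assume p: "p \<in> X \<inter> Y" and up: "reach ends A u p" and pw: "reach ends B p w"
  have "w \<in> Y" using reach_closed[OF _ pw] assms(2) ends_EB p by blast
  then have "w = p" using sep p pw assms(4) shared_marked unfolding separated_def by blast
  then show ?thesis using up by simp
qed

lemma no_cycle_Un:
  assumes "A \<subseteq> EA" "B \<subseteq> EB" "forest ends A" and sep: "separated ends B (X \<inter> Y) (set msB)"
    and e: "e \<in> A" "ends e = {x, y}"
  shows "\<not> reach ends (A \<union> B - {e}) x y"
proof
  assume "reach ends (A \<union> B - {e}) x y"
  moreover have "A \<union> B - {e} = (A - {e}) \<union> B" using EA_EB_disjoint assms(1,2) e(1) by blast
  ultimately have r: "reach ends ((A - {e}) \<union> B) x y" by simp
  have "ends e \<subseteq> X" using ends_EA e(1) assms(1) by blast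
  then have "x \<in> X" "y \<in> X" using e(2) by auto
  moreover have "A - {e} \<subseteq> EA" using assms(1) by blast
  ultimately have "reach ends (A - {e}) x y"
    using reach_Un_within[OF _ assms(2) _ _ sep r] by blast
  then show False using assms(3) e unfolding forest_def by blast
qed

lemma reach_Un_mark:
  assumes "A \<subseteq> EA" "B \<subseteq> EB" "u \<in> X" and sep: "separated ends B (X \<inter> Y) (set msB)"
    and um: "reach ends (A \<union> B) u m" and m: "m \<in> set msA \<union> set msB"
  shows "m \<in> set msA \<and> reach ends A u m"
proof -
  have A_in_X: "\<And>e. e \<in> A \<Longrightarrow> ends e \<subseteq> X" and B_in_Y: "\<And>e. e \<in> B \<Longrightarrow> ends e \<subseteq> Y"
    using assms(1,2) ends_EA ends_EB by blast+
  have marks: "set msA \<subseteq> X" "set msB \<subseteq> Y" using msA_VA VA_X msB_VB VB_Y by blast+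
  from reach_Un_cases[OF assms(1-3) sep um] show ?thesis
  proof (elim disjE bexE conjE)
    assume "reach ends A u m"
    moreover have "m \<in> X" using reach_closed[OF A_in_X calculation assms(3)] .
    ultimately show ?thesis using m marks shared_marked by blast
  next
    fix p assume p: "p \<in> X \<inter> Y" and up: "reach ends A u p" and pm: "reach ends B p m"
    have "m \<in> Y" using reach_closed[OF B_in_Y pm] p by blast
    then have "m \<in> set msB" using m marks shared_marked by blast
    then have "m = p" using sep p pm unfolding separated_def by blast
    then show ?thesis using p up shared_marked by blast
  qed
qed

lemma unique_mark_Un_iff:
  assumes "A \<subseteq> EA" "B \<subseteq> EB" "u \<in> X" and sep: "separated ends B (X \<inter> Y) (set msB)"
  shows "(\<exists>!m. m \<in> set msA \<union> set msB \<and> reach ends (A \<union> B) u m) \<longleftrightarrow>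
         (\<exists>!m. m \<in> set msA \<and> reach ends A u m)"
proof
  assume "\<exists>!m. m \<in> set msA \<union> set msB \<and> reach ends (A \<union> B) u m"
  then obtain m where m: "m \<in> set msA \<union> set msB" "reach ends (A \<union> B) u m"
    and uniq: "\<And>m'. m' \<in> set msA \<union> set msB \<Longrightarrow> reach ends (A \<union> B) u m' \<Longrightarrow> m' = m"
    by blast
  show "\<exists>!m. m \<in> set msA \<and> reach ends A u m"
  proof (rule ex1I)
    show "m \<in> set msA \<and> reach ends A u m" by (rule reach_Un_mark[OF assms m(2,1)])
  next
    fix m' assume "m' \<in> set msA \<and> reach ends A u m'"
    then show "m' = m" using uniq reach_mono[of ends A u m' "A \<union> B"] by blast
  qed
next
  assume "\<exists>!m. m \<in> set msA \<and> reach ends A u m"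
  then obtain m where m: "m \<in> set msA" "reach ends A u m"
    and uniq: "\<And>m'. m' \<in> set msA \<Longrightarrow> reach ends A u m' \<Longrightarrow> m' = m"
    by blast
  show "\<exists>!m. m \<in> set msA \<union> set msB \<and> reach ends (A \<union> B) u m"
  proof (rule ex1I)
    show "m \<in> set msA \<union> set msB \<and> reach ends (A \<union> B) u m"
      using m reach_mono[of ends A u m "A \<union> B"] by blast
  next
    fix m' assume "m' \<in> set msA \<union> set msB \<and> reach ends (A \<union> B) u m'"
    then show "m' = m" using uniq reach_Un_mark[OF assms] by blast
  qed
qed

lemma separated_if_segmental:
  assumes "segmental_forest VB EB ends msB B"
  shows "separated ends B (X \<inter> Y) (set msB)"
  unfolding separated_def
proof (intro ballI impI)
  fix p m assume "p \<in> X \<inter> Y" "m \<in> set msB" "reach ends B p m"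
  moreover from this have "p \<in> set msB" using shared_marked by blast
  moreover from this have "p \<in> VB" using msB_VB by blast
  ultimately show "m = p" using segmental_forest_reach_mark[OF assms] by blast
qed

lemma separated_if_segmental_Un:
  assumes "segmental_forest (VA \<union> VB) (EA \<union> EB) ends ms (A \<union> B)" "set ms = set msA \<union> set msB"
  shows "separated ends B (X \<inter> Y) (set msB)"
  unfolding separated_def
proof (intro ballI impI)
  fix p m assume "p \<in> X \<inter> Y" "m \<in> set msB" and pm: "reach ends B p m"
  moreover from this have "p \<in> set msA" using shared_marked by blast
  moreover from this have "p \<in> VA \<union> VB" using msA_VA by blast
  moreover have "reach ends (A \<union> B) p m" using reach_mono[OF pm] by blast
  ultimately show "m = p" using segmental_forest_reach_mark[OF assms(1)] assms(2) by blast
qed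

end

context split_graph
begin

lemma forest_Un:
  assumes "A \<subseteq> EA" "B \<subseteq> EB" "forest ends A" "forest ends B"
    and sepA: "separated ends A (X \<inter> Y) (set msA)" and sepB: "separated ends B (X \<inter> Y) (set msB)"
  shows "forest ends (A \<union> B)"
  unfolding forest_def
proof (intro ballI allI impI)
  fix e x y assume "e \<in> A \<union> B" and e: "ends e = {x, y}"
  then consider "e \<in> A" | "e \<in> B" by blast
  then show "\<not> reach ends (A \<union> B - {e}) x y"
  proof cases
    case 1
    then show ?thesis using no_cycle_Un[OF assms(1-3) sepB _ e] by blast
  next
    case 2
    have "separated ends A (Y \<inter> X) (set msA)" using sepA by (simp add: Int_commute)
    then show ?thesis using swap.no_cycle_Un[OF assms(2,1,4) _ 2 e] by (simp add: Un_commute)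
  qed
qed

lemma segmental_forest_Un_iff:
  assumes "A \<subseteq> EA" "B \<subseteq> EB" and ms: "set ms = set msA \<union> set msB"
  shows "segmental_forest (VA \<union> VB) (EA \<union> EB) ends ms (A \<union> B) \<longleftrightarrow>
         segmental_forest VA EA ends msA A \<and> segmental_forest VB EB ends msB B"
    (is "?U \<longleftrightarrow> ?SA \<and> ?SB")
proof -
  have unique_A: "(\<exists>!m. m \<in> set ms \<and> reach ends (A \<union> B) u m) \<longleftrightarrow>
      (\<exists>!m. m \<in> set msA \<and> reach ends A u m)"
    if "u \<in> VA" "separated ends B (X \<inter> Y) (set msB)" for u
  proof -
    have "u \<in> X" using that(1) VA_X by blast
    then show ?thesis using unique_mark_Un_iff[OF assms(1,2) _ that(2)] ms by simp
  qed
  have unique_B: "(\<exists>!m. m \<in> set ms \<and> reach ends (A \<union> B) u m) \<longleftrightarrow>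
      (\<exists>!m. m \<in> set msB \<and> reach ends B u m)"
    if "u \<in> VB" "separated ends A (X \<inter> Y) (set msA)" for u
  proof -
    have "u \<in> Y" using that(1) VB_Y by blast
    moreover have "separated ends A (Y \<inter> X) (set msA)"
      using that(2) by (simp add: Int_commute)
    ultimately show ?thesis using swap.unique_mark_Un_iff[OF assms(2,1)] ms
      by (simp add: Un_commute)
  qed
  have unique_iff: "(\<forall>u\<in>VA \<union> VB. \<exists>!m. m \<in> set ms \<and> reach ends (A \<union> B) u m) \<longleftrightarrow>
      (\<forall>u\<in>VA. \<exists>!m. m \<in> set msA \<and> reach ends A u m) \<and>
      (\<forall>u\<in>VB. \<exists>!m. m \<in> set msB \<and> reach ends B u m)"
    if "separated ends A (X \<inter> Y) (set msA)" "separated ends B (X \<inter> Y) (set msB)"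
    using unique_A[OF _ that(2)] unique_B[OF _ that(1)] by (simp add: ball_Un cong: ball_cong)
  show ?thesis
  proof
    assume U: ?U
    have sepB: "separated ends B (X \<inter> Y) (set msB)"
      by (rule separated_if_segmental_Un[OF U ms])
    have "separated ends A (Y \<inter> X) (set msA)"
      by (rule swap.separated_if_segmental_Un) (use U ms in \<open>simp_all add: Un_commute\<close>)
    then have sepA: "separated ends A (X \<inter> Y) (set msA)" by (simp add: Int_commute)
    have "forest ends A" "forest ends B"
      using U forest_subset unfolding segmental_forest_def by blast+
    then show "?SA \<and> ?SB"
      using U assms(1,2) unique_iff[OF sepA sepB] unfolding segmental_forest_def by simp
  next
    assume "?SA \<and> ?SB"
    then have SA: ?SA and SB: ?SB by blast+
    have sepA: "separated ends A (X \<inter> Y) (set msA)"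
      using swap.separated_if_segmental[OF SA] by (simp add: Int_commute)
    have sepB: "separated ends B (X \<inter> Y) (set msB)" by (rule separated_if_segmental[OF SB])
    have "forest ends (A \<union> B)"
      using forest_Un[OF assms(1,2) _ _ sepA sepB] SA SB unfolding segmental_forest_def by blast
    moreover have "A \<union> B \<subseteq> EA \<union> EB" using assms(1,2) by blast
    ultimately show ?U
      using SA SB unique_iff[OF sepA sepB] unfolding segmental_forest_def by simp
  qed
qed

lemma F_count_Un:
  assumes "set ms = set msA \<union> set msB"
  shows "F_count (VA \<union> VB) (EA \<union> EB) ends ms = F_count VA EA ends msA * F_count VB EB ends msB"
proof -
  let ?SA = "{A. segmental_forest VA EA ends msA A}" and ?SB = "{B. segmental_forest VB EB ends msB B}"
  have "{F. segmental_forest (VA \<union> VB) (EA \<union> EB) ends ms F} = (\<lambda>(A, B). A \<union> B) ` (?SA \<times> ?SB)"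
  proof (intro set_eqI iffI)
    fix F assume F: "F \<in> {F. segmental_forest (VA \<union> VB) (EA \<union> EB) ends ms F}"
    then have split: "(F \<inter> EA) \<union> (F \<inter> EB) = F" by (auto simp: segmental_forest_def)
    with F have "(F \<inter> EA, F \<inter> EB) \<in> ?SA \<times> ?SB"
      using segmental_forest_Un_iff[of "F \<inter> EA" "F \<inter> EB", OF _ _ assms] by simp
    moreover have "F = (\<lambda>(A, B). A \<union> B) (F \<inter> EA, F \<inter> EB)" using split by simp
    ultimately show "F \<in> (\<lambda>(A, B). A \<union> B) ` (?SA \<times> ?SB)" by (rule rev_image_eqI)
  next
    fix F assume "F \<in> (\<lambda>(A, B). A \<union> B) ` (?SA \<times> ?SB)"
    then obtain A B where "A \<in> ?SA" "B \<in> ?SB" "F = A \<union> B" by blast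
    then show "F \<in> {F. segmental_forest (VA \<union> VB) (EA \<union> EB) ends ms F}"
      using segmental_forest_Un_iff[OF _ _ assms] by (simp add: segmental_forest_def)
  qed
  moreover have "inj_on (\<lambda>(A, B). A \<union> B) (?SA \<times> ?SB)"
  proof -
    have parts: "(A \<union> B) \<inter> EA = A" "(A \<union> B) \<inter> EB = B" if "A \<in> ?SA" "B \<in> ?SB" for A B
      using that EA_EB_disjoint by (auto simp: segmental_forest_def)
    show ?thesis
    proof (rule inj_onI)
      fix p q assume "p \<in> ?SA \<times> ?SB" "q \<in> ?SA \<times> ?SB"
        "(\<lambda>(A, B). A \<union> B) p = (\<lambda>(A, B). A \<union> B) q"
      moreover obtain A B A' B' where "p = (A, B)" "q = (A', B')" by fastforce
      ultimately have "A \<union> B = A' \<union> B'" "A \<in> ?SA" "B \<in> ?SB" "A' \<in> ?SA" "B' \<in> ?SB" by simp_all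
      then show "p = q" using parts[of A B] parts[of A' B'] \<open>p = (A, B)\<close> \<open>q = (A', B')\<close>
        by metis
    qed
  qed
  ultimately show ?thesis
    unfolding F_count_def by (simp add: card_image card_cartesian_product)
qed

end

lemma inj_glue_map:
  assumes "distinct ms1" "g \<le> length ms1"
  shows "inj (glue_map g ms1 ms2)"
proof (rule injI)
  have "ms1 ! 0 \<noteq> ms1 ! 1" if "2 \<le> g"
  proof -
    have "1 < length ms1" using assms(2) that by simp
    then show ?thesis using assms(1) by (cases ms1) auto
  qed
  moreover fix x y assume "glue_map g ms1 ms2 x = glue_map g ms1 ms2 y"
  ultimately show "x = y" by (auto simp: glue_map_def split: if_splits)
qed

lemma Inl_eq_glue_mapD:
  assumes "Inl z = glue_map g ms1 ms2 p" "g \<le> length ms1" "g \<le> length ms2"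
  shows "z \<in> set ms1 \<and> p \<in> set ms2"
  using assms by (auto simp: glue_map_def split: if_splits intro!: nth_mem)

theorem proposition5p5:
  fixes V1 :: "'a set" and E1 :: "'c set" and ends1 :: "'c \<Rightarrow> 'a set" and ms1 :: "'a list"
    and V2 :: "'b set" and E2 :: "'d set" and ends2 :: "'d \<Rightarrow> 'b set" and ms2 :: "'b list"
    and g :: nat
  assumes G1: "fin_graph V1 E1 ends1" "connected_graph V1 E1 ends1"
      and M1: "distinct ms1" "set ms1 \<subseteq> V1" "length ms1 \<in> {1, 2}"
      and G2: "fin_graph V2 E2 ends2" "connected_graph V2 E2 ends2"
      and M2: "distinct ms2" "set ms2 \<subseteq> V2" "length ms2 \<in> {1, 2}"
      and g: "1 \<le> g" "g \<le> min (length ms1) (length ms2)"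
      and t: "length ms1 + length ms2 - g \<le> 2"
  shows "F_count (glue_V g V1 ms1 V2 ms2) (glue_E E1 E2) (glue_ends g ends1 ms1 ends2 ms2)
           (glue_ms g ms1 ms2)
         = F_count V1 E1 ends1 ms1 * F_count V2 E2 ends2 ms2"
proof -
  let ?f = "glue_map g ms1 ms2" and ?ends = "glue_ends g ends1 ms1 ends2 ms2"
  have inj_f: "inj ?f" using M1(1) g(2) by (simp add: inj_glue_map)
  interpret split_graph ?ends "range Inl" "range ?f" "Inl ` E1" "Inr ` E2" "Inl ` V1" "?f ` V2"
    "map Inl ms1" "map ?f ms2"
    using M1(2) M2(2) Inl_eq_glue_mapD[of _ g ms1 ms2] g(2)
    by unfold_locales (auto simp: glue_ends_def)
  have "graph_hom ends1 ?ends Inl Inl E1" "graph_hom ends2 ?ends ?f Inr E2"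
    by (simp_all add: graph_hom_def glue_ends_def)
  note F_count_parts =
    F_count_image[OF inj_Inl inj_Inl this(1)] F_count_image[OF inj_f inj_Inr this(2)]
  have "F_count (glue_V g V1 ms1 V2 ms2) (glue_E E1 E2) ?ends (glue_ms g ms1 ms2) =
        F_count (Inl ` V1 \<union> ?f ` V2) (Inl ` E1 \<union> Inr ` E2) ?ends (glue_ms g ms1 ms2)"
    by (simp add: glue_V_def glue_E_def)
  also have "\<dots> = F_count (Inl ` V1) (Inl ` E1) ?ends (map Inl ms1) *
                  F_count (?f ` V2) (Inr ` E2) ?ends (map ?f ms2)"
    by (rule F_count_Un) (simp add: glue_ms_def)
  also have "\<dots> = F_count V1 E1 ends1 ms1 * F_count V2 E2 ends2 ms2"
    by (simp add: F_count_parts)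
  finally show ?thesis .
qed

end
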